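(* For all $k,l\ge1$ and every $X\in\mathfrak{W}'_k$, the operator $(\lambda(X)-X)L_{z_l}$ on $\mathfrak{H}^1$ belongs to $\mathfrak{W}'_{k+l}$.
   Context: Let $\mathfrak{H}=\mathbb{Q}\langle x,y\rangle$, $\mathfrak{H}^1=\mathbb{Q}+\mathfrak{H}y$, $\mathfrak{H}^1_n$ its homogeneous part of degree $n$; $L_w(w')=ww'$; products of operators denote composition. Let $z_k=x^{k-1}y$. The harmonic product $\ast$ on $\mathfrak{H}^1$ is the $\mathbb{Q}$-bilinear map with $1\ast w=w\ast1=w$ and $z_kw\ast z_lw'=z_k(w\ast z_lw')+z_l(z_kw\ast w')+z_{k+l}(w\ast w')$; $\mathcal{H}_w(v)=w\ast v$. $\mathfrak{W}$ is the $\mathbb{Q}$-span of the operators $\mathcal{H}_w$ ($w\in\mathfrak{H}^1$) on $\mathfrak{H}^1$; $\mathfrak{W}'$ (resp. $\mathfrak{W}'_n$) the $\mathbb{Q}$-span of the operators $L_{z_k}\mathcal{H}_w$ on $\mathfrak{H}^1$ with $k\ge1$, $w\in\mathfrak{H}^1$ (resp. $1\le k\le n$, $w\in\mathfrak{H}^1_{n-k}$). The $L_{z_k}\mathcal{H}_w$ over distinct pairs $(k,w)$, $w$ a word, are linearly independent, and $\lambda:\mathfrak{W}'\to\mathfrak{W}$ is the $\mathbb{Q}$-linear map with $\lambda(L_{z_k}\mathcal{H}_w)=\mathcal{H}_{z_kw}$. *)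

theory Defs
  imports Complex_Main "HOL-Library.Poly_Mapping"
begin

text \<open>The algebra H^1 = Q + H y is the free Q-algebra on the letters
  z_k = x^(k-1) y (k \<ge> 1).  A word of H^1 is encoded as a list of naturals, the
  entry n standing for the letter z_(n+1); an element of H^1 is a finitely
  supported Q-valued function on such lists.\<close>

type_synonym word = "nat list"
type_synonym H1 = "word \<Rightarrow>\<^sub>0 rat"

text \<open>weight (= degree in x,y) of a word: z_k has degree k\<close>
definition wt :: "word \<Rightarrow> nat" where
  "wt w = sum_list (map Suc w)"

definition Hdeg :: "nat \<Rightarrow> H1 set" where
  "Hdeg n = {p. \<forall>w\<in>Poly_Mapping.keys p. wt w = n}"

definition smul :: "rat \<Rightarrow> H1 \<Rightarrow> H1" where
  "smul c p = Poly_Mapping.map (\<lambda>a. c * a) p"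

text \<open>left multiplication by the letter with code a (i.e. by z_(a+1))\<close>
lift_definition lcons :: "nat \<Rightarrow> H1 \<Rightarrow> H1" is
  "\<lambda>a f w. case w of [] \<Rightarrow> 0 | b # u \<Rightarrow> (if b = a then f u else 0)"
proof -
  fix a :: nat and f :: "word \<Rightarrow> rat"
  assume fin: "finite {x. f x \<noteq> 0}"
  have "{w. (case w of [] \<Rightarrow> 0 | b # u \<Rightarrow> (if b = a then f u else 0)) \<noteq> 0}
        \<subseteq> (Cons a) ` {x. f x \<noteq> 0}"
    by (auto simp: neq_Nil_conv split: list.splits if_splits)
  then show "finite {w. (case w of [] \<Rightarrow> 0 | b # u \<Rightarrow> (if b = a then f u else 0)) \<noteq> (0::rat)}"
    using fin by (rule finite_subset[OF _ finite_imageI])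
qed

definition Lz :: "nat \<Rightarrow> H1 \<Rightarrow> H1" where
  "Lz k p = lcons (k - 1) p"

text \<open>harmonic product of two words:
  z_k u * z_l v = z_k (u * z_l v) + z_l (z_k u * v) + z_(k+l) (u * v)\<close>
function hw :: "word \<Rightarrow> word \<Rightarrow> H1" where
  "hw [] v = Poly_Mapping.single v 1"
| "hw (a # u) [] = Poly_Mapping.single (a # u) 1"
| "hw (a # u) (b # v) =
     lcons a (hw u (b # v)) + lcons b (hw (a # u) v) + lcons (a + b + 1) (hw u v)"
  by pat_completeness auto
termination by (relation "measure (\<lambda>(u, v). length u + length v)") auto

definition harm :: "H1 \<Rightarrow> H1 \<Rightarrow> H1" where
  "harm p q = (\<Sum>u\<in>Poly_Mapping.keys p. \<Sum>v\<in>Poly_Mapping.keys q. smul (Poly_Mapping.lookup p u * Poly_Mapping.lookup q v) (hw u v))"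

definition Hop :: "H1 \<Rightarrow> H1 \<Rightarrow> H1" where
  "Hop w = (\<lambda>v. harm w v)"

definition gensum :: "nat \<Rightarrow> (nat \<Rightarrow> rat) \<Rightarrow> (nat \<Rightarrow> nat) \<Rightarrow> (nat \<Rightarrow> H1) \<Rightarrow> (H1 \<Rightarrow> H1)" where
  "gensum m c ks ws = (\<lambda>v. \<Sum>i<m. smul (c i) (Lz (ks i) (Hop (ws i) v)))"

text \<open>its image under lambda: sum_(i<m) c_i H_(z_(ks i) ws i)\<close>
definition lamsum :: "nat \<Rightarrow> (nat \<Rightarrow> rat) \<Rightarrow> (nat \<Rightarrow> nat) \<Rightarrow> (nat \<Rightarrow> H1) \<Rightarrow> (H1 \<Rightarrow> H1)" where
  "lamsum m c ks ws = (\<lambda>v. \<Sum>i<m. smul (c i) (Hop (Lz (ks i) (ws i)) v))"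

definition Wp :: "nat \<Rightarrow> (H1 \<Rightarrow> H1) set" where
  "Wp n = {X. \<exists>m c ks ws. (\<forall>i<m. 1 \<le> ks i \<and> ks i \<le> n \<and> ws i \<in> Hdeg (n - ks i))
                          \<and> X = gensum m c ks ws}"

end

theory Submission
  imports Defs
begin

(* For a single generator L_{z_a} H_p of W'_k (so p in H^1_(k-a)) the
   recursive rule of the harmonic product, lifted from words to H^1, gives the
   operator identity
       (lambda(L_{z_a} H_p) - L_{z_a} H_p) L_{z_l} = L_{z_l} H_{z_a p} + L_{z_(a+l)} H_p,
   i.e.  z_a p * z_l v - z_a (p * z_l v) = z_l (z_a p * v) + z_(a+l) (p * v).
   Both terms on the right are generators of W'_(k+l), since z_a p lies in H^1_k.  The theorem follows by applying the identity to each summand of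
   X = sum_i c_i L_{z_(ks i)} H_(ws i) and summing up inside the subspace W'_(k+l). *)

lemma lookup_smul [simp]: "Poly_Mapping.lookup (smul c p) w = c * Poly_Mapping.lookup p w"
  by (simp add: smul_def map.rep_eq when_def)

lemma smul_one [simp]: "smul 1 p = p"
  by (rule poly_mapping_eqI) simp

lemma smul_smul: "smul c (smul d p) = smul (c * d) p"
  by (rule poly_mapping_eqI) simp

lemma smul_add: "smul c (p + q) = smul c p + smul c q"
  by (rule poly_mapping_eqI) (simp add: lookup_add algebra_simps)

lemma smul_diff: "smul c (p - q) = smul c p - smul c q"
  by (rule poly_mapping_eqI) (simp add: lookup_minus algebra_simps)

lemma smul_zero: "smul c 0 = 0"
  by (rule poly_mapping_eqI) simp

lemma smul_sum: "smul c (sum f A) = (\<Sum>x\<in>A. smul c (f x))"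
  by (induction A rule: infinite_finite_induct) (simp_all add: smul_zero smul_add)

lemma lookup_lcons:
  "Poly_Mapping.lookup (lcons a p) w =
     (case w of [] \<Rightarrow> 0 | b # u \<Rightarrow> (if b = a then Poly_Mapping.lookup p u else 0))"
  by (simp add: lcons.rep_eq)

lemma keys_lcons: "Poly_Mapping.keys (lcons a p) = Cons a ` Poly_Mapping.keys p"
  by (auto simp: in_keys_iff lookup_lcons split: list.splits if_splits)

lemma lcons_zero: "lcons a 0 = 0"
  by (rule poly_mapping_eqI) (simp add: lookup_lcons split: list.splits)

lemma lcons_add: "lcons a (p + q) = lcons a p + lcons a q"
  by (rule poly_mapping_eqI) (simp add: lookup_add lookup_lcons split: list.splits)

lemma lcons_sum: "lcons a (sum f A) = (\<Sum>x\<in>A. lcons a (f x))"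
  by (induction A rule: infinite_finite_induct) (simp_all add: lcons_zero lcons_add)

lemma lcons_smul: "lcons a (smul c p) = smul c (lcons a p)"
  by (rule poly_mapping_eqI) (simp add: lookup_lcons split: list.splits)

lemma Lz_Hdeg: "1 \<le> a \<Longrightarrow> a \<le> n \<Longrightarrow> p \<in> Hdeg (n - a) \<Longrightarrow> Lz a p \<in> Hdeg n"
  unfolding Hdeg_def Lz_def by (auto simp: wt_def keys_lcons)

lemma harm_lcons_lcons:
  "harm (lcons a p) (lcons b q) =
     (\<Sum>u\<in>Poly_Mapping.keys p. \<Sum>v\<in>Poly_Mapping.keys q.
        smul (Poly_Mapping.lookup p u * Poly_Mapping.lookup q v) (hw (a # u) (b # v)))"
  unfolding harm_def keys_lcons
  by (subst sum.reindex) (auto simp: inj_on_def sum.reindex lookup_lcons)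

lemma harm_lcons_left:
  "harm (lcons a p) q =
     (\<Sum>u\<in>Poly_Mapping.keys p. \<Sum>v\<in>Poly_Mapping.keys q.
        smul (Poly_Mapping.lookup p u * Poly_Mapping.lookup q v) (hw (a # u) v))"
  unfolding harm_def keys_lcons
  by (subst sum.reindex) (auto simp: inj_on_def lookup_lcons)

lemma harm_lcons_right:
  "harm p (lcons b q) =
     (\<Sum>u\<in>Poly_Mapping.keys p. \<Sum>v\<in>Poly_Mapping.keys q.
        smul (Poly_Mapping.lookup p u * Poly_Mapping.lookup q v) (hw u (b # v)))"
  unfolding harm_def keys_lcons
  by (subst sum.reindex) (auto simp: inj_on_def lookup_lcons)

lemma harm_lcons_both:
  "harm (lcons a p) (lcons b q) =
     lcons a (harm p (lcons b q)) + lcons b (harm (lcons a p) q) + lcons (a + b + 1) (harm p q)"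
proof -
  have "harm (lcons a p) (lcons b q) =
          (\<Sum>u\<in>Poly_Mapping.keys p. \<Sum>v\<in>Poly_Mapping.keys q.
             lcons a (smul (Poly_Mapping.lookup p u * Poly_Mapping.lookup q v) (hw u (b # v))))
        + (\<Sum>u\<in>Poly_Mapping.keys p. \<Sum>v\<in>Poly_Mapping.keys q.
             lcons b (smul (Poly_Mapping.lookup p u * Poly_Mapping.lookup q v) (hw (a # u) v)))
        + (\<Sum>u\<in>Poly_Mapping.keys p. \<Sum>v\<in>Poly_Mapping.keys q.
             lcons (a + b + 1) (smul (Poly_Mapping.lookup p u * Poly_Mapping.lookup q v) (hw u v)))"
    unfolding harm_lcons_lcons by (simp add: smul_add lcons_smul sum.distrib)
  then show ?thesis
    unfolding harm_lcons_left harm_lcons_right by (simp add: harm_def lcons_sum)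
qed

lemma harm_Lz_Lz:
  assumes "1 \<le> a" and "1 \<le> l"
  shows "Hop (Lz a p) (Lz l v) - Lz a (Hop p (Lz l v))
           = Lz l (Hop (Lz a p) v) + Lz (a + l) (Hop p v)"
proof -
  obtain a' l' where "a = Suc a'" and "l = Suc l'"
    using assms by (metis Suc_le_D One_nat_def)
  then show ?thesis
    unfolding Lz_def Hop_def using harm_lcons_both[of a' p l' v] by (simp add: algebra_simps)
qed

lemma sum_lessThan_add:
  fixes f :: "nat \<Rightarrow> 'a::comm_monoid_add"
  shows "(\<Sum>i<m + n. f i) = (\<Sum>i<m. f i) + (\<Sum>i<n. f (m + i))"
  by (induction n) (simp_all add: add.assoc)

lemma gensum_in_Wp:
  assumes "\<forall>i<m. 1 \<le> ks i \<and> ks i \<le> n \<and> ws i \<in> Hdeg (n - ks i)"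
  shows "gensum m c ks ws \<in> Wp n"
  unfolding Wp_def using assms by blast

lemma Wp_cases:
  assumes "X \<in> Wp n"
  obtains m c ks ws where "\<forall>i<m. 1 \<le> ks i \<and> ks i \<le> n \<and> ws i \<in> Hdeg (n - ks i)"
    and "X = gensum m c ks ws"
  using assms unfolding Wp_def by blast

lemma Wp_generator:
  assumes "1 \<le> a" and "a \<le> n" and "p \<in> Hdeg (n - a)"
  shows "(\<lambda>v. Lz a (Hop p v)) \<in> Wp n"
proof -
  have "(\<lambda>v. Lz a (Hop p v)) = gensum 1 (\<lambda>_. 1) (\<lambda>_. a) (\<lambda>_. p)"
    by (simp add: gensum_def)
  then show ?thesis
    using assms gensum_in_Wp[of 1 "\<lambda>_. a" n "\<lambda>_. p" "\<lambda>_. 1"] by simp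
qed

lemma Wp_zero: "(\<lambda>v. 0) \<in> Wp n"
proof -
  have "(\<lambda>v. 0) = gensum 0 (\<lambda>_. 0) (\<lambda>_. 1) (\<lambda>_. 0)"
    by (simp add: gensum_def)
  then show ?thesis
    using gensum_in_Wp[of 0] by simp
qed

text \<open>Closure under addition: concatenate the two families of generators.\<close>
lemma Wp_add:
  assumes "X \<in> Wp n" and "Y \<in> Wp n"
  shows "(\<lambda>v. X v + Y v) \<in> Wp n"
proof -
  obtain m c ks ws where
    gX: "\<forall>i<m. 1 \<le> ks i \<and> ks i \<le> n \<and> ws i \<in> Hdeg (n - ks i)" and X: "X = gensum m c ks ws"
    using assms(1) by (rule Wp_cases)
  obtain m' c' ks' ws' where
    gY: "\<forall>i<m'. 1 \<le> ks' i \<and> ks' i \<le> n \<and> ws' i \<in> Hdeg (n - ks' i)"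
    and Y: "Y = gensum m' c' ks' ws'"
    using assms(2) by (rule Wp_cases)
  define c2 where "c2 i = (if i < m then c i else c' (i - m))" for i
  define ks2 where "ks2 i = (if i < m then ks i else ks' (i - m))" for i
  define ws2 where "ws2 i = (if i < m then ws i else ws' (i - m))" for i
  have "(\<lambda>v. X v + Y v) = gensum (m + m') c2 ks2 ws2"
    unfolding X Y gensum_def sum_lessThan_add by (simp add: c2_def ks2_def ws2_def)
  moreover have "gensum (m + m') c2 ks2 ws2 \<in> Wp n"
    using gX gY by (intro gensum_in_Wp) (auto simp: ks2_def ws2_def)
  ultimately show ?thesis
    by simp
qed

lemma Wp_smul:
  assumes "X \<in> Wp n"
  shows "(\<lambda>v. smul d (X v)) \<in> Wp n"
proof -
  obtain m c ks ws where
    g: "\<forall>i<m. 1 \<le> ks i \<and> ks i \<le> n \<and> ws i \<in> Hdeg (n - ks i)" and X: "X = gensum m c ks ws"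
    using assms by (rule Wp_cases)
  have "(\<lambda>v. smul d (X v)) = gensum m (\<lambda>i. d * c i) ks ws"
    unfolding X gensum_def by (simp add: smul_sum smul_smul)
  then show ?thesis
    using gensum_in_Wp[OF g] by simp
qed

lemma Wp_sum:
  assumes "\<And>i. i \<in> A \<Longrightarrow> F i \<in> Wp n"
  shows "(\<lambda>v. \<Sum>i\<in>A. F i v) \<in> Wp n"
  using assms
proof (induction A rule: infinite_finite_induct)
  case (insert i A)
  then show ?case
    using Wp_add[of "F i" n "\<lambda>v. \<Sum>i\<in>A. F i v"] by simp
qed (simp_all add: Wp_zero)

theorem mainTheorem12:
  fixes k l m :: nat and c :: "nat \<Rightarrow> rat" and ks :: "nat \<Rightarrow> nat" and ws :: "nat \<Rightarrow> H1"
    and X :: "H1 \<Rightarrow> H1"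
  assumes "1 \<le> k" and "1 \<le> l"
    and rep: "\<forall>i<m. 1 \<le> ks i \<and> ks i \<le> k \<and> ws i \<in> Hdeg (k - ks i)"
    and X: "X = gensum m c ks ws"
  shows "(\<lambda>v. lamsum m c ks ws (Lz l v) - X (Lz l v)) \<in> Wp (k + l)"
proof -
  define T where "T i v = smul (c i) (Lz l (Hop (Lz (ks i) (ws i)) v) + Lz (ks i + l) (Hop (ws i) v))"
    for i v
  have "lamsum m c ks ws (Lz l v) - X (Lz l v) = (\<Sum>i<m. T i v)" for v
  proof -
    have "lamsum m c ks ws (Lz l v) - X (Lz l v)
        = (\<Sum>i<m. smul (c i) (Hop (Lz (ks i) (ws i)) (Lz l v) - Lz (ks i) (Hop (ws i) (Lz l v))))"
      unfolding X lamsum_def gensum_def by (simp add: smul_diff sum_subtractf)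
    also have "\<dots> = (\<Sum>i<m. T i v)"
      using rep \<open>1 \<le> l\<close> by (intro sum.cong) (simp_all add: T_def harm_Lz_Lz)
    finally show ?thesis .
  qed
  moreover have "T i \<in> Wp (k + l)" if "i < m" for i
  proof -
    have "Lz (ks i) (ws i) \<in> Hdeg k"
      using rep that by (simp add: Lz_Hdeg)
    then show ?thesis
      unfolding T_def using rep that \<open>1 \<le> l\<close>
      by (intro Wp_smul Wp_add Wp_generator) simp_all
  qed
  ultimately show ?thesis
    using Wp_sum[of "{..<m}" T "k + l"] by simp
qed

end
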